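(* Let $\mathbf{X}^n=(x_1^n,x_2^n)$ be generated by the scheme with time step $\Delta t=1/N$ from a deterministic initial point $\mathbf{X}^0\in\mathbb{R}^2$. Then the second moment grows at most linearly: $$\sup_{n\ge1}\ \frac{\mathbb{E}\|\mathbf{X}^n\|^2}{n}<\infty.$$
   Context: Let $\sigma>0$. Let $H(t,x_1,x_2)=H_1(t,x_1)+H_2(t,x_2)$ be a smooth separable Hamiltonian, $1$-periodic in $t,x_1,x_2$, and set $v_1(t,x_2)=-\partial_{x_2}H$, $v_2(t,x_1)=\partial_{x_1}H$; assume $\int_0^1 v_1(t,x_2)\,\mathrm{d}x_2=0$ and $\int_0^1 v_2(t,x_1)\,\mathrm{d}x_1=0$ for all $t$. Let $N\in\mathbb{N}$, $\Delta t=1/N$, $t_{n+\frac12}=(n+\frac12)\Delta t$. The scheme is $$x_1^{n+1}=x_1^n+v_1(t_{n+\frac12},x_2^n)\Delta t+\sigma\sqrt{\Delta t}\,\xi_1^n,\quad x_2^{n+1}=x_2^n+v_2\big(t_{n+\frac12},x_1^n+v_1(t_{n+\frac12},x_2^n)\Delta t\big)\Delta t+\sigma\sqrt{\Delta t}\,\xi_2^n,$$ with $\xi_1^n,\xi_2^n$ i.i.d. $\mathcal{N}(0,1)$. *)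

theory Defs
  imports "HOL-Analysis.Analysis" "HOL-Probability.Probability"
begin

text \<open>Smoothness (C-infinity) of a function of two real variables (t, x), curried:
  there is a family of continuous functions D i j (playing the role of the mixed
  partial derivative of order i in t and j in x) with D 0 0 = f, such that
  D (i+1) j is the partial t-derivative of D i j and D i (j+1) is the partial
  x-derivative of D i j, everywhere.\<close>
definition smooth2 :: "(real \<Rightarrow> real \<Rightarrow> real) \<Rightarrow> bool" where
  "smooth2 f \<longleftrightarrow> (\<exists>D :: nat \<Rightarrow> nat \<Rightarrow> real \<Rightarrow> real \<Rightarrow> real.
     D 0 0 = f \<and>
     (\<forall>i j. continuous_on UNIV (\<lambda>p. D i j (fst p) (snd p))) \<and>
     (\<forall>i j t x. ((\<lambda>s. D i j s x) has_real_derivative D (Suc i) j t x) (at t)) \<and>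
     (\<forall>i j t x. ((\<lambda>y. D i j t y) has_real_derivative D i (Suc j) t x) (at x)))"

fun scheme :: "(real \<Rightarrow> real \<Rightarrow> real) \<Rightarrow> (real \<Rightarrow> real \<Rightarrow> real) \<Rightarrow> real \<Rightarrow> nat \<Rightarrow>
    real \<times> real \<Rightarrow> (nat \<Rightarrow> real) \<Rightarrow> (nat \<Rightarrow> real) \<Rightarrow> nat \<Rightarrow> real \<times> real" where
  "scheme v1 v2 \<sigma> N X0 \<xi>1 \<xi>2 0 = X0"
| "scheme v1 v2 \<sigma> N X0 \<xi>1 \<xi>2 (Suc n) =
    (let (a, b) = scheme v1 v2 \<sigma> N X0 \<xi>1 \<xi>2 n;
         dt = 1 / real N;
         t = (real n + 1/2) * dt;
         y = a + v1 t b * dt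
     in (y + \<sigma> * sqrt dt * \<xi>1 n,
         b + v2 t y * dt + \<sigma> * sqrt dt * \<xi>2 n))"

end

theory Submission
  imports Defs
begin

text \<open>Unrolling the scheme, each coordinate of \<open>X\<^sup>n\<close> is \<open>X\<^sup>0 + \<Delta>t \<Sigma>\<^sub>k<\<^sub>n b\<^sub>k(X\<^sup>k) + \<sigma>\<surd>\<Delta>t \<Sigma>\<^sub>k<\<^sub>n \<xi>\<^sup>k\<close>.
  The noise sum has second moment exactly \<open>n\<close>; the drift terms \<open>b\<^sub>k\<close> are bounded, periodic and have
  mean zero on the torus, because the velocities have mean zero and the deterministic part of a
  step is a volume-preserving shear. Since a Gaussian kick dominates a fixed multiple \<open>\<delta>\<close> of the
  uniform law on a period (a Doeblin condition), the one-step transition operator preserves the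
  torus mean and contracts mean-zero periodic functions by \<open>\<rho> = 1 - \<delta>\<^sup>2 < 1\<close>. Hence the
  correlations \<open>E[b\<^sub>j(X\<^sup>j) b\<^sub>k(X\<^sup>k)]\<close> decay like \<open>\<rho>\<^sup>k\<^sup>-\<^sup>j\<close>, the drift sum has second moment
  \<open>O(n)\<close>, and so does \<open>X\<^sup>n\<close>.\<close>

section \<open>Periodic functions, the uniform law on a period and the Gaussian law\<close>

lemma periodic_add_of_nat:
  fixes q :: "real \<Rightarrow> real"
  assumes per: "\<And>x. q (x + 1) = q x"
  shows "q (y + real n) = q y"
proof (induction n)
  case (Suc n)
  have "q (y + real (Suc n)) = q ((y + real n) + 1)" by (simp add: ac_simps)
  then show ?case using per Suc by simp
qed simp

lemma periodic_add_of_int: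
  fixes q :: "real \<Rightarrow> real"
  assumes per: "\<And>x. q (x + 1) = q x"
  shows "q (x + real_of_int k) = q x"
proof (cases "k \<ge> 0")
  case True
  then obtain n where "k = int n" by (metis nonneg_eq_int)
  then show ?thesis using periodic_add_of_nat[of q, OF per] by simp
next
  case False
  then obtain n where "k = - int n" by (metis minus_minus nonneg_eq_int neg_0_le_iff_le le_cases)
  then show ?thesis using periodic_add_of_nat[of q, OF per, of "x - real n" n] by simp
qed

lemma lborel_integral_translate:
  fixes f :: "real \<Rightarrow> real"
  shows "(\<integral>x. f (x + c) \<partial>lborel) = (\<integral>x. f x \<partial>lborel)"
  using lborel_integral_real_affine[of 1 f c] by (simp add: add.commute)

lemma integrable_indicator_times_bounded:
  fixes q :: "real \<Rightarrow> real"
  assumes meas: "q \<in> borel_measurable borel" and bound: "\<And>x. \<bar>q x\<bar> \<le> C"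
  shows "integrable lborel (\<lambda>x. indicator {a..<b} x * q x)"
proof (rule Bochner_Integration.integrable_bound[where f="\<lambda>x. C * indicator {a..<b} x :: real"])
  have "emeasure lborel {a..<b} < \<infinity>"
    by (cases "a \<le> b") auto
  then show "integrable lborel (\<lambda>x. C * indicator {a..<b} x :: real)" by simp
  show "(\<lambda>x. indicator {a..<b} x * q x) \<in> borel_measurable lborel" using meas by simp
  have "C \<ge> 0" using bound[of 0] by simp
  then show "AE x in lborel. norm (indicator {a..<b} x * q x) \<le> norm (C * indicator {a..<b} x :: real)"
    using bound by (auto simp: indicator_def abs_mult)
qed

lemma integral_indicator_split:
  fixes q :: "real \<Rightarrow> real"
  assumes meas: "q \<in> borel_measurable borel" and bound: "\<And>x. \<bar>q x\<bar> \<le> C"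
    and "a \<le> b" "b \<le> c"
  shows "(\<integral>x. indicator {a..<c} x * q x \<partial>lborel)
       = (\<integral>x. indicator {a..<b} x * q x \<partial>lborel) + (\<integral>x. indicator {b..<c} x * q x \<partial>lborel)"
proof -
  have "(\<integral>x. indicator {a..<c} x * q x \<partial>lborel)
      = (\<integral>x. indicator {a..<b} x * q x + indicator {b..<c} x * q x \<partial>lborel)"
    using assms(3,4) by (intro Bochner_Integration.integral_cong) (auto simp: indicator_def)
  then show ?thesis
    using integrable_indicator_times_bounded[OF meas bound] by simp
qed

lemma integral_indicator_translate:
  fixes q :: "real \<Rightarrow> real"
  assumes "\<And>x. q (x + c) = q x"
  shows "(\<integral>x. indicator {a + c..<b + c} x * q x \<partial>lborel) = (\<integral>x. indicator {a..<b} x * q x \<partial>lborel)"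
proof -
  have "(\<integral>x. indicator {a + c..<b + c} x * q x \<partial>lborel)
      = (\<integral>x. indicator {a + c..<b + c} (x + c) * q (x + c) \<partial>lborel)"
    by (rule lborel_integral_translate[symmetric])
  also have "\<dots> = (\<integral>x. indicator {a..<b} x * q x \<partial>lborel)"
    using assms by (intro Bochner_Integration.integral_cong) (auto simp: indicator_def)
  finally show ?thesis .
qed

lemma integral_period_interval:
  fixes q :: "real \<Rightarrow> real"
  assumes meas: "q \<in> borel_measurable borel" and bound: "\<And>x. \<bar>q x\<bar> \<le> C"
    and per: "\<And>x. q (x + 1) = q x"
  shows "(\<integral>x. indicator {c..<c+1} x * q x \<partial>lborel) = (\<integral>x. indicator {0..<1} x * q x \<partial>lborel)"
proof -
  define r where "r = c - real_of_int \<lfloor>c\<rfloor>"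
  have r: "0 \<le> r" "r < 1" unfolding r_def by linarith+
  note split = integral_indicator_split[OF meas bound]
  have "(\<integral>x. indicator {c..<c+1} x * q x \<partial>lborel) = (\<integral>x. indicator {r..<r+1} x * q x \<partial>lborel)"
    using integral_indicator_translate[of q "real_of_int \<lfloor>c\<rfloor>" r "r + 1"]
    by (simp add: periodic_add_of_int[of q, OF per] r_def)
  also have "\<dots> = (\<integral>x. indicator {r..<1} x * q x \<partial>lborel) + (\<integral>x. indicator {1..<r+1} x * q x \<partial>lborel)"
    using r by (intro split) auto
  also have "(\<integral>x. indicator {1..<r+1} x * q x \<partial>lborel) = (\<integral>x. indicator {0..<r} x * q x \<partial>lborel)"
    using integral_indicator_translate[of q 1 0 r] per by (simp add: add.commute)
  also have "(\<integral>x. indicator {r..<1} x * q x \<partial>lborel) + \<dots> = (\<integral>x. indicator {0..<1} x * q x \<partial>lborel)"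
    using split[of 0 r 1] r by simp
  finally show ?thesis .
qed

definition unif :: "real measure" where
  "unif = density lborel (\<lambda>x. ennreal (indicator {0..<1::real} x))"

definition gauss :: "real measure" where
  "gauss = density lborel (\<lambda>x. ennreal (std_normal_density x))"

lemma sets_unif[simp, measurable_cong]: "sets unif = sets borel"
  by (simp add: unif_def)

lemma space_unif[simp]: "space unif = UNIV"
  by (simp add: unif_def)

lemma sets_gauss[simp, measurable_cong]: "sets gauss = sets borel"
  by (simp add: gauss_def)

lemma space_gauss[simp]: "space gauss = UNIV"
  by (simp add: gauss_def)

lemma prob_space_gauss: "prob_space gauss"
  unfolding gauss_def by (rule prob_space_normal_density) simp

lemma prob_space_unif: "prob_space unif"
proof
  have "emeasure unif (space unif) = (\<integral>\<^sup>+x. indicator {0..<1::real} x \<partial>lborel)"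
    unfolding unif_def by (subst emeasure_density) (auto simp: ennreal_indicator)
  also have "\<dots> = 1" by simp
  finally show "emeasure unif (space unif) = 1" .
qed

interpretation gauss: prob_space gauss by (rule prob_space_gauss)
interpretation unif: prob_space unif by (rule prob_space_unif)

lemma integral_unif:
  fixes f :: "real \<Rightarrow> real"
  assumes "f \<in> borel_measurable borel"
  shows "(\<integral>x. f x \<partial>unif) = (\<integral>x. indicator {0..<1} x * f x \<partial>lborel)"
  unfolding unif_def using assms by (subst integral_density) auto

lemma integral_gauss:
  fixes f :: "real \<Rightarrow> real"
  assumes "f \<in> borel_measurable borel"
  shows "(\<integral>x. f x \<partial>gauss) = (\<integral>x. std_normal_density x * f x \<partial>lborel)"
  unfolding gauss_def using assms by (subst integral_density) auto

lemma integral_unif_periodic_translate: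
  fixes q :: "real \<Rightarrow> real"
  assumes meas: "q \<in> borel_measurable borel" and bound: "\<And>x. \<bar>q x\<bar> \<le> C"
    and per: "\<And>x. q (x + 1) = q x"
  shows "(\<integral>x. q (x + c) \<partial>unif) = (\<integral>x. q x \<partial>unif)"
proof -
  have "(\<integral>x. q (x + c) \<partial>unif) = (\<integral>x. indicator {c..<c+1} (x + c) * q (x + c) \<partial>lborel)"
    using meas by (subst integral_unif) (auto intro!: Bochner_Integration.integral_cong simp: indicator_def)
  also have "\<dots> = (\<integral>x. indicator {0..<1} x * q x \<partial>lborel)"
    using lborel_integral_translate[of "\<lambda>x. indicator {c..<c+1} x * q x" c]
      integral_period_interval[OF meas bound per] by simp
  also have "\<dots> = (\<integral>x. q x \<partial>unif)"
    using meas by (subst integral_unif) auto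
  finally show ?thesis .
qed

lemma abs_integral_le_bound:
  fixes f :: "'a \<Rightarrow> real"
  assumes "prob_space M" "f \<in> borel_measurable M" "\<And>x. x \<in> space M \<Longrightarrow> \<bar>f x\<bar> \<le> C"
  shows "\<bar>\<integral>x. f x \<partial>M\<bar> \<le> C"
proof -
  interpret prob_space M by fact
  have "integrable M f"
    using assms by (intro integrable_const_bound[where B=C]) auto
  then have "\<bar>\<integral>x. f x \<partial>M\<bar> \<le> (\<integral>x. C \<partial>M)"
    using assms by (intro order_trans[OF integral_abs_bound] integral_mono) auto
  then show ?thesis by (simp add: prob_space)
qed

lemma integral_prob_swap:
  fixes F :: "'a \<Rightarrow> 'b \<Rightarrow> real"
  assumes "prob_space M1" "prob_space M2"
    and "(\<lambda>(x,y). F x y) \<in> borel_measurable (M1 \<Otimes>\<^sub>M M2)"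
    and "\<And>x y. x \<in> space M1 \<Longrightarrow> y \<in> space M2 \<Longrightarrow> \<bar>F x y\<bar> \<le> C"
  shows "(\<integral>x. (\<integral>y. F x y \<partial>M2) \<partial>M1) = (\<integral>y. (\<integral>x. F x y \<partial>M1) \<partial>M2)"
proof -
  interpret pair_prob_space M1 M2
    using assms(1,2) by (simp add: pair_prob_space_def pair_sigma_finite_def prob_space_imp_sigma_finite)
  have "integrable (M1 \<Otimes>\<^sub>M M2) (\<lambda>(x,y). F x y)"
    using assms(3,4) by (intro P.integrable_const_bound[where B=C]) (auto simp: space_pair_measure)
  then show ?thesis by (rule Fubini_integral[symmetric])
qed

lemma integral_prob_swap3:
  fixes F :: "'a \<Rightarrow> 'b \<Rightarrow> 'c \<Rightarrow> real"
  assumes M: "prob_space M" and N1: "prob_space N1" and N2: "prob_space N2"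
    and F_meas: "(\<lambda>p. F (fst (fst p)) (snd (fst p)) (snd p)) \<in> borel_measurable ((M \<Otimes>\<^sub>M N1) \<Otimes>\<^sub>M N2)"
    and bound: "\<And>x z1 z2. \<bar>F x z1 z2\<bar> \<le> C"
  shows "(\<integral>x. (\<integral>z1. (\<integral>z2. F x z1 z2 \<partial>N2) \<partial>N1) \<partial>M) = (\<integral>z1. (\<integral>z2. (\<integral>x. F x z1 z2 \<partial>M) \<partial>N2) \<partial>N1)"
proof -
  interpret N2: prob_space N2 by (fact N2)
  have inner_meas: "(\<lambda>(x, z1). \<integral>z2. F x z1 z2 \<partial>N2) \<in> borel_measurable (M \<Otimes>\<^sub>M N1)"
    using N2.borel_measurable_lebesgue_integral[of "\<lambda>(x, z1) z2. F x z1 z2" "M \<Otimes>\<^sub>M N1"] F_meas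
    by (simp add: split_beta')
  have slice_meas: "(\<lambda>(x, z2). F x z1 z2) \<in> borel_measurable (M \<Otimes>\<^sub>M N2)" if "z1 \<in> space N1" for z1
  proof -
    have "(\<lambda>(x, z2). ((x, z1), z2)) \<in> measurable (M \<Otimes>\<^sub>M N2) ((M \<Otimes>\<^sub>M N1) \<Otimes>\<^sub>M N2)"
      using that by measurable
    from measurable_compose[OF this F_meas] show ?thesis by (simp add: split_beta')
  qed
  have "(\<integral>x. (\<integral>z1. (\<integral>z2. F x z1 z2 \<partial>N2) \<partial>N1) \<partial>M) = (\<integral>z1. (\<integral>x. (\<integral>z2. F x z1 z2 \<partial>N2) \<partial>M) \<partial>N1)"
    using measurable_Pair2[OF slice_meas] bound
    by (intro integral_prob_swap[OF M N1 inner_meas] abs_integral_le_bound[OF N2]) auto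
  also have "\<dots> = (\<integral>z1. (\<integral>z2. (\<integral>x. F x z1 z2 \<partial>M) \<partial>N2) \<partial>N1)"
    using slice_meas bound by (intro Bochner_Integration.integral_cong refl integral_prob_swap[OF M N2]) auto
  finally show ?thesis .
qed

section \<open>Doeblin minorization of Gaussian kicks\<close>

text \<open>\<open>doeblin_const s\<close> is the minimum of the density of \<open>N(0, s\<^sup>2)\<close> over the centred window of
  length one. Hence a Gaussian kick dominates \<open>doeblin_const s\<close> times the uniform law on a period,
  and averaging a periodic function against \<open>N(u, s\<^sup>2)\<close> pulls it towards its mean.\<close>

definition doeblin_const :: "real \<Rightarrow> real" where
  "doeblin_const s = std_normal_density (1 / (2 * s)) / s"

lemma doeblin_const_pos: "s > 0 \<Longrightarrow> 0 < doeblin_const s"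
  unfolding doeblin_const_def by (simp add: normal_density_pos)

lemma std_normal_density_le_abs:
  assumes "\<bar>z\<bar> \<le> l"
  shows "std_normal_density l \<le> std_normal_density z"
proof -
  have "z\<^sup>2 \<le> l\<^sup>2" using assms by (metis abs_ge_self abs_le_square_iff dual_order.trans)
  then show ?thesis unfolding std_normal_density_def by (simp add: divide_right_mono)
qed

lemma std_normal_density_minus_window:
  fixes l :: real
  assumes l: "l > 0"
  defines "\<psi> \<equiv> \<lambda>z. std_normal_density z - std_normal_density l * indicator {-l..<l} z"
  shows "\<psi> z \<ge> 0" and "integrable lborel \<psi>"
    and "(\<integral>z. \<psi> z \<partial>lborel) = 1 - 2 * l * std_normal_density l"
proof -
  show "\<psi> z \<ge> 0"
    using std_normal_density_le_abs[of z l] by (cases "z \<in> {-l..<l}") (auto simp: \<psi>_def)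
  have ind: "integrable lborel (\<lambda>z. indicator {-l..<l} z :: real)"
    using l by simp
  then show "integrable lborel \<psi>" unfolding \<psi>_def by simp
  have "measure lborel {-l..<l} = 2 * l" using l by (simp add: measure_def)
  then show "(\<integral>z. \<psi> z \<partial>lborel) = 1 - 2 * l * std_normal_density l"
    using ind unfolding \<psi>_def by simp
qed

lemma doeblin_const_le_one:
  assumes s: "s > 0"
  shows "doeblin_const s \<le> 1"
proof -
  define l where "l = 1 / (2 * s)"
  have l0: "l > 0" using s by (simp add: l_def)
  note \<psi> = std_normal_density_minus_window[OF l0]
  have "0 \<le> (\<integral>z. std_normal_density z - std_normal_density l * indicator {-l..<l} z \<partial>lborel)"
    using \<psi>(1) by (intro integral_nonneg_AE) auto
  then show ?thesis
    using \<psi>(3) s by (simp add: doeblin_const_def l_def)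
qed

lemma integral_window_periodic:
  fixes q :: "real \<Rightarrow> real"
  assumes s: "s > 0" and meas: "q \<in> borel_measurable borel" and bound: "\<And>x. \<bar>q x\<bar> \<le> C"
    and per: "\<And>x. q (x + 1) = q x"
  shows "(\<integral>z. indicator {- (1 / (2 * s)) ..< 1 / (2 * s)} z * q (u + s*z) \<partial>lborel) = (\<integral>x. q x \<partial>unif) / s"
proof -
  define f where "f = (\<lambda>x. indicator {u - 1/2..<(u - 1/2) + 1} x * q x)"
  have window: "f (u + s * z) = indicator {- (1 / (2 * s)) ..< 1 / (2 * s)} z * q (u + s*z)" for z
    using s by (auto simp: f_def indicator_def field_simps)
  have "(\<integral>z. indicator {- (1 / (2 * s)) ..< 1 / (2 * s)} z * q (u + s*z) \<partial>lborel)
      = (\<integral>z. f (u + s * z) \<partial>lborel)"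
    by (simp only: window)
  also have "\<dots> = (\<integral>x. f x \<partial>lborel) / s"
    using s lborel_integral_real_affine[of s f u] by simp
  also have "(\<integral>x. f x \<partial>lborel) = (\<integral>x. q x \<partial>unif)"
    unfolding f_def using integral_period_interval[OF meas bound per, of "u - 1/2"] integral_unif[OF meas] by simp
  finally show ?thesis .
qed

lemma integral_gauss_periodic_minorization:
  fixes q :: "real \<Rightarrow> real"
  assumes s: "s > 0" and meas[measurable]: "q \<in> borel_measurable borel"
    and bound: "\<And>x. \<bar>q x\<bar> \<le> C" and per: "\<And>x. q (x + 1) = q x"
  shows "\<bar>(\<integral>z. q (u + s*z) \<partial>gauss) - doeblin_const s * (\<integral>x. q x \<partial>unif)\<bar> \<le> (1 - doeblin_const s) * C"
proof -
  define l where "l = 1 / (2 * s)"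
  define \<psi> where "\<psi> = (\<lambda>z. std_normal_density z - std_normal_density l * indicator {-l..<l} z)"
  have l0: "l > 0" using s by (simp add: l_def)
  note \<psi> = std_normal_density_minus_window[OF l0, folded \<psi>_def]
  have \<psi>0: "\<psi> z \<ge> 0" for z
    using \<psi>(1) by (simp add: \<psi>_def)
  have C0: "C \<ge> 0" using bound[of 0] by simp
  have qs: "\<bar>q (u + s*z)\<bar> \<le> C" for z by (rule bound)
  have int_window: "integrable lborel (\<lambda>z. indicator {-l..<l} z * q (u + s*z))"
    by (rule integrable_indicator_times_bounded[OF _ qs]) measurable
  have int_rest: "integrable lborel (\<lambda>z. \<psi> z * q (u + s*z))"
  proof (rule Bochner_Integration.integrable_bound[where f="\<lambda>z. C * \<psi> z"])
    show "integrable lborel (\<lambda>z. C * \<psi> z)" using \<psi>(2) by simp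
    show "(\<lambda>z. \<psi> z * q (u + s*z)) \<in> borel_measurable lborel" unfolding \<psi>_def by measurable
    show "AE z in lborel. norm (\<psi> z * q (u + s*z)) \<le> norm (C * \<psi> z)"
      using \<psi>0 qs C0 by (auto simp: abs_mult mult.commute[of "\<psi> _"] intro!: mult_right_mono)
  qed
  have "(\<integral>z. q (u + s*z) \<partial>gauss)
      = (\<integral>z. std_normal_density l * (indicator {-l..<l} z * q (u + s*z)) + \<psi> z * q (u + s*z) \<partial>lborel)"
    by (subst integral_gauss) (auto intro!: Bochner_Integration.integral_cong simp: \<psi>_def algebra_simps)
  also have "\<dots> = doeblin_const s * (\<integral>x. q x \<partial>unif) + (\<integral>z. \<psi> z * q (u + s*z) \<partial>lborel)"
    using int_window int_rest integral_window_periodic[OF s meas bound per, of u] s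
    by (simp add: l_def doeblin_const_def)
  finally have "(\<integral>z. q (u + s*z) \<partial>gauss) - doeblin_const s * (\<integral>x. q x \<partial>unif)
      = (\<integral>z. \<psi> z * q (u + s*z) \<partial>lborel)" by simp
  also have "\<bar>\<dots>\<bar> \<le> (\<integral>z. \<bar>\<psi> z * q (u + s*z)\<bar> \<partial>lborel)"
    by (rule integral_abs_bound)
  also have "\<dots> \<le> (\<integral>z. C * \<psi> z \<partial>lborel)"
    using integrable_abs[OF int_rest] \<psi>0 \<psi>(2) qs C0
    by (intro integral_mono) (auto simp: abs_mult mult.commute[of "\<psi> _"] intro!: mult_right_mono)
  also have "\<dots> = (1 - doeblin_const s) * C"
    using \<psi>(3) s by (simp add: l_def doeblin_const_def)
  finally show ?thesis .
qed

section \<open>Gaussian smoothing on the torus\<close>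

definition periodic2 :: "(real \<times> real \<Rightarrow> real) \<Rightarrow> bool" where
  "periodic2 g \<longleftrightarrow> (\<forall>a b. g (a + 1, b) = g (a, b) \<and> g (a, b + 1) = g (a, b))"

definition torus_mean :: "(real \<times> real \<Rightarrow> real) \<Rightarrow> real" where
  "torus_mean g = (\<integral>a. (\<integral>b. g (a, b) \<partial>unif) \<partial>unif)"

definition gauss_smooth :: "real \<Rightarrow> (real \<times> real \<Rightarrow> real) \<Rightarrow> real \<Rightarrow> real \<Rightarrow> real" where
  "gauss_smooth s g y e = (\<integral>z1. (\<integral>z2. g (y + s*z1, e + s*z2) \<partial>gauss) \<partial>gauss)"

lemma periodic2D:
  "periodic2 g \<Longrightarrow> g (a + 1, b) = g (a, b)" "periodic2 g \<Longrightarrow> g (a, b + 1) = g (a, b)"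
  by (simp_all add: periodic2_def)

lemma measurable_gauss_smooth[measurable]:
  assumes [measurable]: "g \<in> borel_measurable (borel \<Otimes>\<^sub>M borel)"
  shows "(\<lambda>x. gauss_smooth s g (fst x) (snd x)) \<in> borel_measurable (borel \<Otimes>\<^sub>M borel)"
  unfolding gauss_smooth_def by measurable

lemma abs_gauss_smooth_le:
  assumes [measurable]: "g \<in> borel_measurable (borel \<Otimes>\<^sub>M borel)" and "\<And>x. \<bar>g x\<bar> \<le> C"
  shows "\<bar>gauss_smooth s g y e\<bar> \<le> C"
  unfolding gauss_smooth_def
  by (rule abs_integral_le_bound[OF prob_space_gauss], measurable,
      rule abs_integral_le_bound[OF prob_space_gauss]) (auto simp: assms(2))

lemma periodic2_gauss_smooth:
  assumes "periodic2 g"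
  shows "gauss_smooth s g (y + 1) e = gauss_smooth s g y e" "gauss_smooth s g y (e + 1) = gauss_smooth s g y e"
  using periodic2D[OF assms, of "y + s*_"] periodic2D[OF assms, of _ "e + s*_"]
  by (simp_all add: gauss_smooth_def ac_simps)

text \<open>Applying the one-dimensional minorization first in the second and then in the first
  variable gives the contraction factor 1 - \<delta>^2 on mean-zero periodic functions.\<close>

lemma gauss_smooth_contracts:
  assumes s: "s > 0" and [measurable]: "g \<in> borel_measurable (borel \<Otimes>\<^sub>M borel)"
    and bound: "\<And>x. \<bar>g x\<bar> \<le> C" and per: "periodic2 g" and mean: "torus_mean g = 0"
  shows "\<bar>gauss_smooth s g y e\<bar> \<le> (1 - (doeblin_const s)\<^sup>2) * C"
proof -
  define \<delta> where "\<delta> = doeblin_const s"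
  have \<delta>0: "0 < \<delta>" unfolding \<delta>_def by (rule doeblin_const_pos[OF s])
  define r where "r = (\<lambda>u. \<integral>z2. g (u, e + s*z2) \<partial>gauss)"
  define gm where "gm = (\<lambda>u. \<integral>w. g (u, w) \<partial>unif)"
  have r_meas[measurable]: "r \<in> borel_measurable borel" and gm_meas[measurable]: "gm \<in> borel_measurable borel"
    unfolding r_def gm_def by measurable
  have gm_bound: "\<bar>gm u\<bar> \<le> C" and r_bound: "\<bar>r u\<bar> \<le> C" for u
    unfolding gm_def r_def by (rule abs_integral_le_bound, auto intro: prob_space_unif prob_space_gauss simp: bound)+
  have gm_per: "gm (u + 1) = gm u" for u
    using periodic2D(1)[OF per] unfolding gm_def by simp
  have r_near_gm: "\<bar>r u - \<delta> * gm u\<bar> \<le> (1 - \<delta>) * C" for u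
    unfolding r_def gm_def \<delta>_def
    by (rule integral_gauss_periodic_minorization[OF s]) (measurable, simp_all add: bound periodic2D[OF per])
  have "\<bar>(\<integral>z. gm (y + s*z) \<partial>gauss) - \<delta> * (\<integral>x. gm x \<partial>unif)\<bar> \<le> (1 - \<delta>) * C"
    unfolding \<delta>_def by (rule integral_gauss_periodic_minorization[OF s gm_meas gm_bound gm_per])
  then have gm_small: "\<bar>\<integral>z. gm (y + s*z) \<partial>gauss\<bar> \<le> (1 - \<delta>) * C"
    using mean unfolding gm_def torus_mean_def by simp
  have rest_small: "\<bar>\<integral>z. r (y + s*z) - \<delta> * gm (y + s*z) \<partial>gauss\<bar> \<le> (1 - \<delta>) * C"
    by (rule abs_integral_le_bound[OF prob_space_gauss]) (auto simp: r_near_gm)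
  define A where "A = (\<integral>z. gm (y + s*z) \<partial>gauss)"
  define R where "R = (\<integral>z. r (y + s*z) - \<delta> * gm (y + s*z) \<partial>gauss)"
  have "integrable gauss (\<lambda>z. r (y + s*z))"
    using r_bound by (intro gauss.integrable_const_bound[where B=C]) auto
  moreover have "integrable gauss (\<lambda>z. gm (y + s*z))"
    using gm_bound by (intro gauss.integrable_const_bound[where B=C]) auto
  ultimately have "gauss_smooth s g y e = \<delta> * A + R"
    unfolding A_def R_def by (simp add: gauss_smooth_def r_def)
  then have "\<bar>gauss_smooth s g y e\<bar> \<le> \<delta> * \<bar>A\<bar> + \<bar>R\<bar>"
    using abs_triangle_ineq[of "\<delta> * A" R] \<delta>0 by (simp add: abs_mult)
  also have "\<dots> \<le> \<delta> * ((1 - \<delta>) * C) + (1 - \<delta>) * C"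
    using gm_small rest_small \<delta>0 unfolding A_def R_def by (intro add_mono mult_left_mono) auto
  also have "\<dots> = (1 - \<delta>\<^sup>2) * C" by (simp add: power2_eq_square algebra_simps)
  finally show ?thesis unfolding \<delta>_def .
qed

lemma torus_mean_translate:
  assumes [measurable]: "g \<in> borel_measurable (borel \<Otimes>\<^sub>M borel)"
    and bound: "\<And>x. \<bar>g x\<bar> \<le> C" and per: "periodic2 g"
  shows "torus_mean (\<lambda>(a, b). g (a + x, b + y)) = torus_mean g"
proof -
  define gm where "gm = (\<lambda>u. \<integral>w. g (u, w) \<partial>unif)"
  have [measurable]: "gm \<in> borel_measurable borel" unfolding gm_def by measurable
  have "(\<integral>b. g (a + x, b + y) \<partial>unif) = gm (a + x)" for a
    unfolding gm_def by (rule integral_unif_periodic_translate[where q="\<lambda>w. g (a + x, w)" and C=C])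
      (measurable, simp_all add: bound periodic2D[OF per])
  then have "torus_mean (\<lambda>(a, b). g (a + x, b + y)) = (\<integral>a. gm (a + x) \<partial>unif)"
    unfolding torus_mean_def by simp
  also have "\<dots> = torus_mean g"
    unfolding torus_mean_def gm_def[symmetric]
    using periodic2D(1)[OF per] abs_integral_le_bound[OF prob_space_unif, of "\<lambda>w. g (_, w)" C]
    by (intro integral_unif_periodic_translate[where C=C]) (auto simp: gm_def bound)
  finally show ?thesis .
qed

lemma torus_mean_shear:
  assumes [measurable]: "g \<in> borel_measurable (borel \<Otimes>\<^sub>M borel)"
    and bound: "\<And>x. \<bar>g x\<bar> \<le> C" and per: "periodic2 g"
    and [measurable]: "c \<in> borel_measurable borel" "d \<in> borel_measurable borel"
    and d_per: "\<And>x. d (x + 1) = d x"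
  shows "torus_mean (\<lambda>(a, b). g (a + c b, b + d (a + c b))) = torus_mean g"
proof -
  have "torus_mean (\<lambda>(a, b). g (a + c b, b + d (a + c b)))
      = (\<integral>b. (\<integral>a. g (a + c b, b + d (a + c b)) \<partial>unif) \<partial>unif)"
    unfolding torus_mean_def prod.case
    by (rule integral_prob_swap[OF prob_space_unif prob_space_unif, where C=C]) (auto simp: bound)
  also have "\<dots> = (\<integral>b. (\<integral>a. g (a, b + d a) \<partial>unif) \<partial>unif)"
  proof (rule Bochner_Integration.integral_cong[OF refl])
    fix b
    show "(\<integral>a. g (a + c b, b + d (a + c b)) \<partial>unif) = (\<integral>a. g (a, b + d a) \<partial>unif)"
      by (rule integral_unif_periodic_translate[where q="\<lambda>a. g (a, b + d a)" and C=C])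
         (measurable, simp_all add: bound d_per periodic2D[OF per])
  qed
  also have "\<dots> = (\<integral>a. (\<integral>b. g (a, b + d a) \<partial>unif) \<partial>unif)"
    by (rule integral_prob_swap[OF prob_space_unif prob_space_unif, where C=C, symmetric]) (auto simp: bound)
  also have "\<dots> = torus_mean g"
  proof (unfold torus_mean_def, rule Bochner_Integration.integral_cong[OF refl])
    fix a
    show "(\<integral>b. g (a, b + d a) \<partial>unif) = (\<integral>b. g (a, b) \<partial>unif)"
      by (rule integral_unif_periodic_translate[where q="\<lambda>b. g (a, b)" and C=C])
         (measurable, simp_all add: bound periodic2D[OF per])
  qed
  finally show ?thesis .
qed

lemma torus_mean_gauss_smooth:
  assumes [measurable]: "g \<in> borel_measurable (borel \<Otimes>\<^sub>M borel)"
    and bound: "\<And>x. \<bar>g x\<bar> \<le> C" and per: "periodic2 g"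
  shows "torus_mean (\<lambda>(y, e). gauss_smooth s g y e) = torus_mean g"
proof -
  have "torus_mean (\<lambda>(y, e). gauss_smooth s g y e)
      = (\<integral>y. (\<integral>z1. (\<integral>z2. (\<integral>e. g (y + s*z1, e + s*z2) \<partial>unif) \<partial>gauss) \<partial>gauss) \<partial>unif)"
  proof (unfold torus_mean_def prod.case gauss_smooth_def, rule Bochner_Integration.integral_cong[OF refl])
    fix y
    show "(\<integral>e. (\<integral>z1. (\<integral>z2. g (y + s*z1, e + s*z2) \<partial>gauss) \<partial>gauss) \<partial>unif)
        = (\<integral>z1. (\<integral>z2. (\<integral>e. g (y + s*z1, e + s*z2) \<partial>unif) \<partial>gauss) \<partial>gauss)"
      by (rule integral_prob_swap3[OF prob_space_unif prob_space_gauss prob_space_gauss, where C=C])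
         (measurable, simp add: bound)
  qed
  also have "\<dots> = (\<integral>z1. (\<integral>z2. torus_mean (\<lambda>(y, e). g (y + s*z1, e + s*z2)) \<partial>gauss) \<partial>gauss)"
    unfolding torus_mean_def prod.case
    by (rule integral_prob_swap3[OF prob_space_unif prob_space_gauss prob_space_gauss, where C=C])
       (measurable, auto intro!: abs_integral_le_bound[OF prob_space_unif] simp: bound)
  also have "\<dots> = torus_mean g"
    by (simp add: torus_mean_translate[OF _ bound per] gauss.prob_space[unfolded space_gauss])
  finally show ?thesis .
qed

lemma (in prob_space) integral_indep_var_eq:
  fixes X Y :: "'a \<Rightarrow> 'b" and F :: "'b \<times> 'b \<Rightarrow> real"
  assumes indep: "indep_var Ma X Mb Y" and distr_Y: "distr M Mb Y = N"
    and F_meas: "F \<in> borel_measurable (Ma \<Otimes>\<^sub>M Mb)" and bound: "\<And>p. \<bar>F p\<bar> \<le> C"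
  shows "(\<integral>\<omega>. F (X \<omega>, Y \<omega>) \<partial>M) = (\<integral>\<omega>. (\<integral>y. F (X \<omega>, y) \<partial>N) \<partial>M)"
proof -
  define DX where "DX = distr M Ma X"
  have X[measurable]: "X \<in> measurable M Ma" and Y[measurable]: "Y \<in> measurable M Mb"
    and joint: "DX \<Otimes>\<^sub>M N = distr M (Ma \<Otimes>\<^sub>M Mb) (\<lambda>\<omega>. (X \<omega>, Y \<omega>))"
    using indep unfolding indep_var_distribution_eq DX_def distr_Y by auto
  interpret pair_prob_space DX N
    unfolding DX_def distr_Y[symmetric]
    by (simp add: pair_prob_space_def pair_sigma_finite_def prob_space_imp_sigma_finite prob_space_distr)
  have sets_N: "sets N = sets Mb" using distr_Y by auto
  have F_meas': "F \<in> borel_measurable (DX \<Otimes>\<^sub>M N)"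
    using F_meas by (simp cong: measurable_cong_sets add: sets_pair_measure_cong[OF _ sets_N] DX_def)
  have inner_meas: "(\<lambda>x. \<integral>y. F (x, y) \<partial>N) \<in> borel_measurable Ma"
    using M2.borel_measurable_lebesgue_integral[of "\<lambda>x y. F (x, y)" DX] F_meas'
    by (simp add: DX_def cong: measurable_cong_sets)
  have "(\<integral>\<omega>. F (X \<omega>, Y \<omega>) \<partial>M) = (\<integral>p. F p \<partial>(DX \<Otimes>\<^sub>M N))"
    unfolding joint using F_meas by (subst integral_distr) auto
  also have "\<dots> = (\<integral>x. (\<integral>y. F (x, y) \<partial>N) \<partial>DX)"
    using F_meas' bound by (intro integral_fst'[symmetric] P.integrable_const_bound[where B=C]) auto
  also have "\<dots> = (\<integral>\<omega>. (\<integral>y. F (X \<omega>, y) \<partial>N) \<partial>M)"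
    unfolding DX_def using inner_meas by (subst integral_distr) auto
  finally show ?thesis .
qed

lemma sum_power_diff_le:
  fixes r :: real
  assumes "0 \<le> r" "r < 1"
  shows "(\<Sum>j<n. r ^ (n - j)) \<le> 1 / (1 - r)"
proof -
  have "(\<Sum>j<n. r ^ (n - j)) = (\<Sum>i<n. r ^ Suc i)"
    by (rule sum.reindex_bij_witness[where i="\<lambda>i. n - Suc i" and j="\<lambda>j. n - Suc j"])
      (auto simp: power_Suc[symmetric] Suc_diff_Suc)
  also have "\<dots> \<le> (\<Sum>i<n. r ^ i)"
    using assms by (intro sum_mono) (auto intro: mult_left_le_one_le)
  also have "\<dots> = (1 - r ^ n) / (1 - r)" using assms by (simp add: sum_gp_strict)
  also have "\<dots> \<le> 1 / (1 - r)" using assms by (simp add: divide_right_mono)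
  finally show ?thesis .
qed

lemma square_sum3_le: fixes a b c :: real shows "(a + b + c)\<^sup>2 \<le> 3 * (a\<^sup>2 + b\<^sup>2 + c\<^sup>2)"
proof -
  have "0 \<le> (a - b)\<^sup>2 + (a - c)\<^sup>2 + (b - c)\<^sup>2" by simp
  then show ?thesis by (simp add: power2_eq_square algebra_simps)
qed

lemma (in prob_space) std_normal_moments:
  assumes D: "distributed M lborel Z std_normal_density"
  shows "integrable M Z" "integrable M (\<lambda>\<omega>. (Z \<omega>)\<^sup>2)" "expectation Z = 0" "expectation (\<lambda>\<omega>. (Z \<omega>)\<^sup>2) = 1"
proof -
  show "integrable M Z"
    using distributed_integrable[OF D, of "\<lambda>x. x"] integrable_std_normal_moment[of 1] by simp
  show "integrable M (\<lambda>\<omega>. (Z \<omega>)\<^sup>2)"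
    using distributed_integrable[OF D, of "\<lambda>x. x\<^sup>2"] integrable_std_normal_moment[of 2] by simp
  show E0: "expectation Z = 0" by (rule standard_normal_distributed_expectation[OF D])
  show "expectation (\<lambda>\<omega>. (Z \<omega>)\<^sup>2) = 1"
    using standard_normal_distributed_variance[OF D] E0 by simp
qed

lemma (in prob_space) second_moment_affine_le:
  fixes D S :: "'a \<Rightarrow> real"
  assumes [measurable]: "D \<in> borel_measurable M" "S \<in> borel_measurable M"
    and D2: "integrable M (\<lambda>\<omega>. (D \<omega>)\<^sup>2)" and S2: "integrable M (\<lambda>\<omega>. (S \<omega>)\<^sup>2)"
  shows "integrable M (\<lambda>\<omega>. (c + a * D \<omega> + b * S \<omega>)\<^sup>2)"
    and "expectation (\<lambda>\<omega>. (c + a * D \<omega> + b * S \<omega>)\<^sup>2)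
          \<le> 3 * (c\<^sup>2 + a\<^sup>2 * expectation (\<lambda>\<omega>. (D \<omega>)\<^sup>2) + b\<^sup>2 * expectation (\<lambda>\<omega>. (S \<omega>)\<^sup>2))"
proof -
  have major: "integrable M (\<lambda>\<omega>. 3 * (c\<^sup>2 + a\<^sup>2 * (D \<omega>)\<^sup>2 + b\<^sup>2 * (S \<omega>)\<^sup>2))"
    using D2 S2 by simp
  have pointwise: "(c + a * D \<omega> + b * S \<omega>)\<^sup>2 \<le> 3 * (c\<^sup>2 + a\<^sup>2 * (D \<omega>)\<^sup>2 + b\<^sup>2 * (S \<omega>)\<^sup>2)" for \<omega>
    using square_sum3_le[of c "a * D \<omega>" "b * S \<omega>"] by (simp add: power_mult_distrib)
  show int: "integrable M (\<lambda>\<omega>. (c + a * D \<omega> + b * S \<omega>)\<^sup>2)"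
    by (rule Bochner_Integration.integrable_bound[OF major])
       (measurable, use pointwise in \<open>auto intro: order_trans[OF _ abs_ge_self]\<close>)
  have "expectation (\<lambda>\<omega>. (c + a * D \<omega> + b * S \<omega>)\<^sup>2)
      \<le> expectation (\<lambda>\<omega>. 3 * (c\<^sup>2 + a\<^sup>2 * (D \<omega>)\<^sup>2 + b\<^sup>2 * (S \<omega>)\<^sup>2))"
    by (rule integral_mono[OF int major pointwise])
  also have "\<dots> = 3 * (c\<^sup>2 + a\<^sup>2 * expectation (\<lambda>\<omega>. (D \<omega>)\<^sup>2) + b\<^sup>2 * expectation (\<lambda>\<omega>. (S \<omega>)\<^sup>2))"
    using D2 S2 by (simp add: prob_space)
  finally show "expectation (\<lambda>\<omega>. (c + a * D \<omega> + b * S \<omega>)\<^sup>2)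
      \<le> 3 * (c\<^sup>2 + a\<^sup>2 * expectation (\<lambda>\<omega>. (D \<omega>)\<^sup>2) + b\<^sup>2 * expectation (\<lambda>\<omega>. (S \<omega>)\<^sup>2))" .
qed

section \<open>The scheme as a Markov chain\<close>

definition drift_map :: "(real \<Rightarrow> real \<Rightarrow> real) \<Rightarrow> (real \<Rightarrow> real \<Rightarrow> real) \<Rightarrow> real \<Rightarrow> nat \<Rightarrow>
    real \<times> real \<Rightarrow> real \<times> real" where
  "drift_map v1 v2 dt n x =
    (let t = (real n + 1/2) * dt; y = fst x + v1 t (snd x) * dt in (y, snd x + v2 t y * dt))"

lemma scheme_Suc_drift_map:
  "scheme v1 v2 \<sigma> N X0 x1 x2 (Suc n) =
     drift_map v1 v2 (1 / real N) n (scheme v1 v2 \<sigma> N X0 x1 x2 n) + (\<sigma> * sqrt (1 / real N)) *\<^sub>R (x1 n, x2 n)"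
  by (simp add: Let_def drift_map_def split: prod.split)

lemma scheme_cong:
  "(\<And>i. i < n \<Longrightarrow> x1 i = y1 i \<and> x2 i = y2 i) \<Longrightarrow>
    scheme v1 v2 \<sigma> N X0 x1 x2 n = scheme v1 v2 \<sigma> N X0 y1 y2 n"
  by (induction n) (auto simp: scheme_Suc_drift_map)

lemma measurable_drift_map[measurable]:
  assumes [measurable]: "\<And>t. v1 t \<in> borel_measurable borel" "\<And>t. v2 t \<in> borel_measurable borel"
  shows "drift_map v1 v2 dt n \<in> measurable (borel \<Otimes>\<^sub>M borel) (borel \<Otimes>\<^sub>M borel)"
  unfolding drift_map_def Let_def by measurable

lemma measurable_drift_step:
  assumes [measurable]: "\<And>t. v1 t \<in> borel_measurable borel" "\<And>t. v2 t \<in> borel_measurable borel"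
  shows "(\<lambda>p. drift_map v1 v2 dt n (fst p) + s *\<^sub>R snd p)
    \<in> measurable ((borel \<Otimes>\<^sub>M borel) \<Otimes>\<^sub>M (borel \<Otimes>\<^sub>M borel)) (borel \<Otimes>\<^sub>M borel)"
proof -
  have "(\<lambda>p. drift_map v1 v2 dt n (fst p) + s *\<^sub>R snd p) =
    (\<lambda>p. (fst (drift_map v1 v2 dt n (fst p)) + s * fst (snd p), snd (drift_map v1 v2 dt n (fst p)) + s * snd (snd p)))"
    by (simp add: fun_eq_iff plus_prod_def)
  then show ?thesis by simp
qed

locale scheme_setting = prob_space M for M :: "'a measure" +
  fixes v1 v2 :: "real \<Rightarrow> real \<Rightarrow> real" and \<sigma> :: real and N :: nat and X0 :: "real \<times> real"
    and \<xi>1 \<xi>2 :: "nat \<Rightarrow> 'a \<Rightarrow> real" and B :: real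
  assumes sigma_pos: "\<sigma> > 0" and N_pos: "N \<ge> 1"
    and v1_meas[measurable]: "\<And>t. v1 t \<in> borel_measurable borel"
    and v2_meas[measurable]: "\<And>t. v2 t \<in> borel_measurable borel"
    and v1_bound: "\<And>t x. \<bar>v1 t x\<bar> \<le> B" and v2_bound: "\<And>t x. \<bar>v2 t x\<bar> \<le> B"
    and v1_periodic: "\<And>t x. v1 t (x + 1) = v1 t x" and v2_periodic: "\<And>t x. v2 t (x + 1) = v2 t x"
    and v1_mean: "\<And>t. (\<integral>x. v1 t x \<partial>unif) = 0" and v2_mean: "\<And>t. (\<integral>x. v2 t x \<partial>unif) = 0"
    and indep_noise: "indep_vars (\<lambda>_. borel) (\<lambda>k. case k of Inl n \<Rightarrow> \<xi>1 n | Inr n \<Rightarrow> \<xi>2 n) UNIV"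
    and \<xi>1_normal: "\<And>n. distributed M lborel (\<xi>1 n) std_normal_density"
    and \<xi>2_normal: "\<And>n. distributed M lborel (\<xi>2 n) std_normal_density"
begin

definition "dt = 1 / real N"
definition "s = \<sigma> * sqrt dt"
definition "noise k = (case k of Inl n \<Rightarrow> \<xi>1 n | Inr n \<Rightarrow> \<xi>2 n)"
definition "X n \<omega> = scheme v1 v2 \<sigma> N X0 (\<lambda>k. \<xi>1 k \<omega>) (\<lambda>k. \<xi>2 k \<omega>) n"
definition "scheme_of_noise n a = scheme v1 v2 \<sigma> N X0 (\<lambda>k. a (Inl k)) (\<lambda>k. a (Inr k)) n"
definition "past_idx m = Inl ` {..<m} \<union> Inr ` {..<(m::nat)}"
definition "past m \<omega> = restrict (\<lambda>i. noise i \<omega>) (past_idx m)"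
definition "fresh_idx m = {Inl m, Inr (m::nat)}"
definition "fresh m \<omega> = restrict (\<lambda>i. noise i \<omega>) (fresh_idx m)"
definition "transition m g x = gauss_smooth s g (fst (drift_map v1 v2 dt m x)) (snd (drift_map v1 v2 dt m x))"

lemma dt_pos: "dt > 0" using N_pos by (simp add: dt_def)

lemma s_pos: "s > 0" using sigma_pos dt_pos by (simp add: s_def)

lemma noise_simps[simp]: "noise (Inl n) = \<xi>1 n" "noise (Inr n) = \<xi>2 n"
  by (simp_all add: noise_def)

lemma noise_normal: "distributed M lborel (noise k) std_normal_density"
  by (cases k) (auto simp: \<xi>1_normal \<xi>2_normal)

lemma noise_measurable[measurable]: "noise k \<in> borel_measurable M"
  using noise_normal[of k] by (auto simp: distributed_def)

lemma \<xi>1_measurable[measurable]: "\<xi>1 n \<in> borel_measurable M"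
  and \<xi>2_measurable[measurable]: "\<xi>2 n \<in> borel_measurable M"
  using noise_measurable[of "Inl n"] noise_measurable[of "Inr n"] by simp_all

lemma indep_vars_noise: "indep_vars (\<lambda>_. borel) noise UNIV"
  using indep_noise unfolding noise_def .

lemma X_Suc: "X (Suc n) \<omega> = drift_map v1 v2 dt n (X n \<omega>) + s *\<^sub>R (\<xi>1 n \<omega>, \<xi>2 n \<omega>)"
  unfolding X_def s_def dt_def by (rule scheme_Suc_drift_map)

lemma X_eq_scheme_of_noise: "n \<le> m \<Longrightarrow> X n \<omega> = scheme_of_noise n (past m \<omega>)"
  unfolding X_def scheme_of_noise_def past_def
  by (rule scheme_cong) (auto simp: past_idx_def)

lemma scheme_of_noise_measurable:
  "n \<le> m \<Longrightarrow> scheme_of_noise n \<in> measurable (PiM (past_idx m) (\<lambda>_. borel)) (borel \<Otimes>\<^sub>M borel)"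
proof (induction n)
  case 0
  then show ?case
    by (simp add: scheme_of_noise_def) (rule measurable_const, simp add: space_pair_measure)
next
  case (Suc n)
  then have IH: "scheme_of_noise n \<in> measurable (PiM (past_idx m) (\<lambda>_. borel)) (borel \<Otimes>\<^sub>M borel)"
    by simp
  have "(\<lambda>a. (scheme_of_noise n a, (a (Inl n), a (Inr n))))
      \<in> measurable (PiM (past_idx m) (\<lambda>_. borel)) ((borel \<Otimes>\<^sub>M borel) \<Otimes>\<^sub>M (borel \<Otimes>\<^sub>M borel))"
    using Suc.prems by (intro measurable_Pair IH measurable_component_singleton) (auto simp: past_idx_def)
  from measurable_compose[OF this measurable_drift_step[where ?v1.0=v1 and ?v2.0=v2 and dt=dt and n=n and s=s, OF v1_meas v2_meas]]
  have "(\<lambda>a. drift_map v1 v2 dt n (scheme_of_noise n a) + s *\<^sub>R (a (Inl n), a (Inr n)))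
      \<in> measurable (PiM (past_idx m) (\<lambda>_. borel)) (borel \<Otimes>\<^sub>M borel)"
    by (simp add: comp_def)
  moreover have "scheme_of_noise (Suc n) = (\<lambda>a. drift_map v1 v2 dt n (scheme_of_noise n a) + s *\<^sub>R (a (Inl n), a (Inr n)))"
    unfolding scheme_of_noise_def s_def dt_def by (intro ext scheme_Suc_drift_map)
  ultimately show ?case by simp
qed

lemma past_measurable[measurable]: "past m \<in> measurable M (PiM (past_idx m) (\<lambda>_. borel))"
  unfolding past_def by measurable

lemma X_measurable[measurable]: "X n \<in> measurable M (borel \<Otimes>\<^sub>M borel)"
proof -
  have "X n = scheme_of_noise n \<circ> past n" by (auto simp: fun_eq_iff X_eq_scheme_of_noise)
  then show ?thesis using scheme_of_noise_measurable[of n n] by simp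
qed


lemma distr_noise: "distr M borel (noise k) = gauss"
proof -
  have "distr M borel (noise k) = distr M lborel (noise k)" by (rule distr_cong) auto
  also have "\<dots> = gauss" using noise_normal[of k] by (simp add: distributed_def gauss_def)
  finally show ?thesis .
qed

lemma indep_noise_pair: "k \<noteq> l \<Longrightarrow> indep_var borel (noise k) borel (noise l)"
  using indep_var_compose[OF indep_var_restrict[OF indep_vars_noise, of "{k}" "{l}"],
      of "\<lambda>r. r k" borel "\<lambda>r. r l" borel]
  by (simp add: comp_def)

lemma integral_fresh_pair:
  fixes f :: "real \<times> real \<Rightarrow> real"
  assumes f_meas[measurable]: "f \<in> borel_measurable (borel \<Otimes>\<^sub>M borel)" and bound: "\<And>z. \<bar>f z\<bar> \<le> C"
  shows "(\<integral>\<omega>. f (\<xi>1 m \<omega>, \<xi>2 m \<omega>) \<partial>M) = (\<integral>z1. (\<integral>z2. f (z1, z2) \<partial>gauss) \<partial>gauss)"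
proof -
  interpret gauss2: pair_prob_space gauss gauss
    by (simp add: pair_prob_space_def pair_sigma_finite_def prob_space_imp_sigma_finite prob_space_gauss)
  have "distr M (borel \<Otimes>\<^sub>M borel) (\<lambda>\<omega>. (\<xi>1 m \<omega>, \<xi>2 m \<omega>)) = gauss \<Otimes>\<^sub>M gauss"
    using indep_noise_pair[of "Inl m" "Inr m"] distr_noise[of "Inl m"] distr_noise[of "Inr m"]
    unfolding indep_var_distribution_eq by simp
  moreover have "(\<integral>z. f z \<partial>distr M (borel \<Otimes>\<^sub>M borel) (\<lambda>\<omega>. (\<xi>1 m \<omega>, \<xi>2 m \<omega>))) = (\<integral>\<omega>. f (\<xi>1 m \<omega>, \<xi>2 m \<omega>) \<partial>M)"
    by (rule integral_distr) measurable
  ultimately have "(\<integral>\<omega>. f (\<xi>1 m \<omega>, \<xi>2 m \<omega>) \<partial>M) = (\<integral>z. f z \<partial>(gauss \<Otimes>\<^sub>M gauss))"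
    by simp
  also have "\<dots> = (\<integral>z1. (\<integral>z2. f (z1, z2) \<partial>gauss) \<partial>gauss)"
    using bound gauss2.integral_fst'[of f]
    by (simp add: split_beta' gauss2.P.integrable_const_bound[where B=C])
  finally show ?thesis .
qed

lemma fresh_measurable[measurable]: "fresh m \<in> measurable M (PiM (fresh_idx m) (\<lambda>_. borel))"
  unfolding fresh_def by measurable

lemma indep_past_fresh:
  "indep_var (PiM (past_idx m) (\<lambda>_. borel)) (past m) (PiM (fresh_idx m) (\<lambda>_. borel)) (fresh m)"
  unfolding past_def[abs_def] fresh_def[abs_def]
  by (rule indep_var_restrict[OF indep_vars_noise]) (auto simp: past_idx_def fresh_idx_def)

lemma integral_fresh_noise:
  fixes F :: "(nat + nat \<Rightarrow> real) \<Rightarrow> real \<times> real \<Rightarrow> real"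
  assumes F_meas: "(\<lambda>p. F (fst p) (snd p)) \<in> borel_measurable (PiM (past_idx m) (\<lambda>_. borel) \<Otimes>\<^sub>M (borel \<Otimes>\<^sub>M borel))"
    and bound: "\<And>a z. \<bar>F a z\<bar> \<le> C"
  shows "(\<integral>\<omega>. F (past m \<omega>) (\<xi>1 m \<omega>, \<xi>2 m \<omega>) \<partial>M)
       = (\<integral>\<omega>. (\<integral>z1. (\<integral>z2. F (past m \<omega>) (z1, z2) \<partial>gauss) \<partial>gauss) \<partial>M)"
proof -
  define h where "h = (\<lambda>r::nat + nat \<Rightarrow> real. (r (Inl m), r (Inr m)))"
  have [measurable]: "h \<in> measurable (PiM (fresh_idx m) (\<lambda>_. borel)) (borel \<Otimes>\<^sub>M borel)"
    unfolding h_def by (intro measurable_Pair measurable_component_singleton) (auto simp: fresh_idx_def)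
  have h_fresh: "h (fresh m \<omega>) = (\<xi>1 m \<omega>, \<xi>2 m \<omega>)" for \<omega>
    by (simp add: h_def fresh_def fresh_idx_def)
  have F'_meas: "(\<lambda>p. F (fst p) (h (snd p)))
      \<in> borel_measurable (PiM (past_idx m) (\<lambda>_. borel) \<Otimes>\<^sub>M PiM (fresh_idx m) (\<lambda>_. borel))"
    using measurable_compose[OF _ F_meas, of "\<lambda>p. (fst p, h (snd p))"] by simp
  have F_slice: "F a \<in> borel_measurable (borel \<Otimes>\<^sub>M borel)" if "a \<in> space (PiM (past_idx m) (\<lambda>_. borel))" for a
    using measurable_Pair2[OF F_meas that] by simp
  have "(\<integral>\<omega>. F (past m \<omega>) (\<xi>1 m \<omega>, \<xi>2 m \<omega>) \<partial>M)
      = (\<integral>\<omega>. (\<integral>r. F (past m \<omega>) (h r) \<partial>distr M (PiM (fresh_idx m) (\<lambda>_. borel)) (fresh m)) \<partial>M)"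
    using integral_indep_var_eq[OF indep_past_fresh refl F'_meas, of C] bound by (simp add: h_fresh)
  also have "\<dots> = (\<integral>\<omega>. (\<integral>z1. (\<integral>z2. F (past m \<omega>) (z1, z2) \<partial>gauss) \<partial>gauss) \<partial>M)"
  proof (rule Bochner_Integration.integral_cong[OF refl])
    fix \<omega> assume "\<omega> \<in> space M"
    then have [measurable]: "F (past m \<omega>) \<in> borel_measurable (borel \<Otimes>\<^sub>M borel)"
      by (intro F_slice measurable_space[OF past_measurable])
    show "(\<integral>r. F (past m \<omega>) (h r) \<partial>distr M (PiM (fresh_idx m) (\<lambda>_. borel)) (fresh m))
        = (\<integral>z1. (\<integral>z2. F (past m \<omega>) (z1, z2) \<partial>gauss) \<partial>gauss)"
      using integral_fresh_pair[of "F (past m \<omega>)" C m] bound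
      by (subst integral_distr) (auto simp: h_fresh)
  qed
  finally show ?thesis .
qed


lemma measurable_transition[measurable]:
  assumes [measurable]: "g \<in> borel_measurable (borel \<Otimes>\<^sub>M borel)"
  shows "transition m g \<in> borel_measurable (borel \<Otimes>\<^sub>M borel)"
proof -
  have "transition m g = (\<lambda>x. gauss_smooth s g (fst x) (snd x)) \<circ> drift_map v1 v2 dt m"
    by (simp add: fun_eq_iff transition_def)
  then show ?thesis by simp
qed

lemma integral_markov_step:
  assumes "j \<le> m"
    and [measurable]: "\<Phi> \<in> borel_measurable (borel \<Otimes>\<^sub>M borel)" and \<Phi>_bound: "\<And>x. \<bar>\<Phi> x\<bar> \<le> C1"
    and [measurable]: "g \<in> borel_measurable (borel \<Otimes>\<^sub>M borel)" and g_bound: "\<And>x. \<bar>g x\<bar> \<le> C2"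
  shows "(\<integral>\<omega>. \<Phi> (X j \<omega>) * g (X (Suc m) \<omega>) \<partial>M) = (\<integral>\<omega>. \<Phi> (X j \<omega>) * transition m g (X m \<omega>) \<partial>M)"
proof -
  define F where "F = (\<lambda>a z. \<Phi> (scheme_of_noise j a) * g (drift_map v1 v2 dt m (scheme_of_noise m a) + s *\<^sub>R z))"
  have [measurable]: "scheme_of_noise j \<in> measurable (PiM (past_idx m) (\<lambda>_. borel)) (borel \<Otimes>\<^sub>M borel)"
    "scheme_of_noise m \<in> measurable (PiM (past_idx m) (\<lambda>_. borel)) (borel \<Otimes>\<^sub>M borel)"
    using scheme_of_noise_measurable \<open>j \<le> m\<close> by auto
  have F_meas: "(\<lambda>p. F (fst p) (snd p)) \<in> borel_measurable (PiM (past_idx m) (\<lambda>_. borel) \<Otimes>\<^sub>M (borel \<Otimes>\<^sub>M borel))"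
  proof -
    have "(\<lambda>p. (scheme_of_noise m (fst p), snd p))
        \<in> measurable (PiM (past_idx m) (\<lambda>_. borel) \<Otimes>\<^sub>M (borel \<Otimes>\<^sub>M borel)) ((borel \<Otimes>\<^sub>M borel) \<Otimes>\<^sub>M (borel \<Otimes>\<^sub>M borel))"
      by measurable
    from measurable_compose[OF this measurable_drift_step[where ?v1.0=v1 and ?v2.0=v2 and dt=dt and n=m and s=s, OF v1_meas v2_meas]]
    have [measurable]: "(\<lambda>p. drift_map v1 v2 dt m (scheme_of_noise m (fst p)) + s *\<^sub>R snd p)
        \<in> measurable (PiM (past_idx m) (\<lambda>_. borel) \<Otimes>\<^sub>M (borel \<Otimes>\<^sub>M borel)) (borel \<Otimes>\<^sub>M borel)"
      by (simp add: comp_def)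
    show ?thesis unfolding F_def by measurable
  qed
  have "C1 \<ge> 0" using \<Phi>_bound[of 0] by simp
  then have F_bound: "\<bar>F a z\<bar> \<le> C1 * C2" for a z
    unfolding F_def abs_mult by (intro mult_mono \<Phi>_bound g_bound) auto
  have X_past: "X j \<omega> = scheme_of_noise j (past m \<omega>)" "X m \<omega> = scheme_of_noise m (past m \<omega>)" for \<omega>
    using X_eq_scheme_of_noise \<open>j \<le> m\<close> by auto
  have "(\<integral>\<omega>. \<Phi> (X j \<omega>) * g (X (Suc m) \<omega>) \<partial>M) = (\<integral>\<omega>. F (past m \<omega>) (\<xi>1 m \<omega>, \<xi>2 m \<omega>) \<partial>M)"
    by (simp only: F_def X_Suc X_past)
  also have "\<dots> = (\<integral>\<omega>. (\<integral>z1. (\<integral>z2. F (past m \<omega>) (z1, z2) \<partial>gauss) \<partial>gauss) \<partial>M)"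
    by (rule integral_fresh_noise[OF F_meas F_bound])
  also have "\<dots> = (\<integral>\<omega>. \<Phi> (X j \<omega>) * transition m g (X m \<omega>) \<partial>M)"
    by (simp add: F_def X_past transition_def gauss_smooth_def plus_prod_def)
  finally show ?thesis .
qed

lemma drift_map_periodic:
  "drift_map v1 v2 dt m (a + 1, b) = drift_map v1 v2 dt m (a, b) + (1, 0)"
  "drift_map v1 v2 dt m (a, b + 1) = drift_map v1 v2 dt m (a, b) + (0, 1)"
proof -
  let ?t = "(real m + 1/2) * dt"
  have "v2 ?t ((a + 1) + v1 ?t b * dt) = v2 ?t (a + v1 ?t b * dt)"
    using v2_periodic[of ?t "a + v1 ?t b * dt"] by (simp add: ac_simps)
  then show "drift_map v1 v2 dt m (a + 1, b) = drift_map v1 v2 dt m (a, b) + (1, 0)"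
    by (simp add: drift_map_def Let_def)
  show "drift_map v1 v2 dt m (a, b + 1) = drift_map v1 v2 dt m (a, b) + (0, 1)"
    by (simp add: drift_map_def Let_def v1_periodic)
qed

lemma periodic2_transition: "periodic2 g \<Longrightarrow> periodic2 (transition m g)"
  unfolding periodic2_def[of "transition m g"] transition_def
  by (simp add: drift_map_periodic periodic2_gauss_smooth)

lemma torus_mean_transition:
  assumes [measurable]: "g \<in> borel_measurable (borel \<Otimes>\<^sub>M borel)"
    and bound: "\<And>x. \<bar>g x\<bar> \<le> C" and per: "periodic2 g"
  shows "torus_mean (transition m g) = torus_mean g"
proof -
  let ?t = "(real m + 1/2) * dt"
  define c where "c = (\<lambda>b. v1 ?t b * dt)"
  define d where "d = (\<lambda>u. v2 ?t u * dt)"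
  define G where "G = (\<lambda>x. gauss_smooth s g (fst x) (snd x))"
  have "transition m g = (\<lambda>(a, b). G (a + c b, b + d (a + c b)))"
    by (auto simp: fun_eq_iff transition_def drift_map_def Let_def G_def c_def d_def)
  then have "torus_mean (transition m g) = torus_mean (\<lambda>(a, b). G (a + c b, b + d (a + c b)))"
    by simp
  also have "\<dots> = torus_mean G"
    using abs_gauss_smooth_le[OF _ bound] periodic2_gauss_smooth[OF per]
    by (intro torus_mean_shear[where C=C]) (auto simp: G_def periodic2_def c_def d_def v2_periodic)
  also have "\<dots> = torus_mean g"
    using torus_mean_gauss_smooth[OF _ bound per] by (simp add: G_def case_prod_beta')
  finally show ?thesis .
qed

definition "rho = 1 - (doeblin_const s)\<^sup>2"

lemma rho_bounds: "0 \<le> rho" "rho < 1"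
  using doeblin_const_pos[OF s_pos] doeblin_const_le_one[OF s_pos]
  unfolding rho_def by (auto simp: power_le_one)

lemma transition_contracts:
  assumes [measurable]: "g \<in> borel_measurable (borel \<Otimes>\<^sub>M borel)"
    and "\<And>x. \<bar>g x\<bar> \<le> C" "periodic2 g" "torus_mean g = 0"
  shows "\<bar>transition m g x\<bar> \<le> rho * C"
  unfolding transition_def rho_def by (rule gauss_smooth_contracts[OF s_pos assms])

lemma correlation_decay:
  assumes \<Phi>_meas[measurable]: "\<Phi> \<in> borel_measurable (borel \<Otimes>\<^sub>M borel)"
    and \<Phi>_bound: "\<And>x. \<bar>\<Phi> x\<bar> \<le> C1"
  shows "g \<in> borel_measurable (borel \<Otimes>\<^sub>M borel) \<Longrightarrow> (\<And>x. \<bar>g x\<bar> \<le> C2) \<Longrightarrow> periodic2 g \<Longrightarrow>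
    torus_mean g = 0 \<Longrightarrow> \<bar>\<integral>\<omega>. \<Phi> (X j \<omega>) * g (X (j + d) \<omega>) \<partial>M\<bar> \<le> C1 * C2 * rho ^ d"
proof (induction d arbitrary: g C2)
  case 0
  have "C1 \<ge> 0" using \<Phi>_bound[of 0] by simp
  with 0 show ?case
    by (intro abs_integral_le_bound[OF prob_space_axioms])
       (measurable, auto simp: abs_mult intro!: mult_mono \<Phi>_bound 0(2))
next
  case (Suc d)
  note g_meas[measurable] = Suc.prems(1)
  have "(\<integral>\<omega>. \<Phi> (X j \<omega>) * g (X (j + Suc d) \<omega>) \<partial>M) = (\<integral>\<omega>. \<Phi> (X j \<omega>) * transition (j + d) g (X (j + d) \<omega>) \<partial>M)"
    using integral_markov_step[OF le_add1 \<Phi>_meas \<Phi>_bound g_meas Suc.prems(2)] by simp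
  also have "\<bar>\<dots>\<bar> \<le> C1 * (rho * C2) * rho ^ d"
    using Suc.prems torus_mean_transition[OF g_meas Suc.prems(2,3)]
    by (intro Suc.IH transition_contracts periodic2_transition) auto
  finally show ?case by (simp add: algebra_simps)
qed


lemma noise_prod_integrable: "integrable M (\<lambda>\<omega>. noise k \<omega> * noise l \<omega>)"
proof (rule Bochner_Integration.integrable_bound[where f="\<lambda>\<omega>. (noise k \<omega>)\<^sup>2 + (noise l \<omega>)\<^sup>2"])
  show "integrable M (\<lambda>\<omega>. (noise k \<omega>)\<^sup>2 + (noise l \<omega>)\<^sup>2)"
    using std_normal_moments(2)[OF noise_normal[of k]] std_normal_moments(2)[OF noise_normal[of l]] by simp
  have "\<bar>x * y\<bar> \<le> x\<^sup>2 + y\<^sup>2" for x y :: real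
    using sum_squares_bound[of x y] sum_squares_bound[of x "- y"] by (simp add: abs_if)
  then show "AE \<omega> in M. norm (noise k \<omega> * noise l \<omega>) \<le> norm ((noise k \<omega>)\<^sup>2 + (noise l \<omega>)\<^sup>2)"
    by simp
qed simp

lemma expectation_noise_prod: "expectation (\<lambda>\<omega>. noise k \<omega> * noise l \<omega>) = (if k = l then 1 else 0)"
proof (cases "k = l")
  case True
  then show ?thesis using std_normal_moments(4)[OF noise_normal[of k]] by (simp add: power2_eq_square)
next
  case False
  have "expectation (\<lambda>\<omega>. noise k \<omega> * noise l \<omega>) = expectation (noise k) * expectation (noise l)"
    using std_normal_moments(1)[OF noise_normal] by (intro indep_var_lebesgue_integral indep_noise_pair False)
  then show ?thesis using False std_normal_moments(3)[OF noise_normal[of k]] by simp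
qed

lemma noise_sum_second_moment:
  assumes "inj (\<iota> :: nat \<Rightarrow> nat + nat)"
  shows "integrable M (\<lambda>\<omega>. (\<Sum>k<n. noise (\<iota> k) \<omega>)\<^sup>2)"
    and "expectation (\<lambda>\<omega>. (\<Sum>k<n. noise (\<iota> k) \<omega>)\<^sup>2) = real n"
proof -
  have sq: "(\<Sum>k<n. noise (\<iota> k) \<omega>)\<^sup>2 = (\<Sum>j<n. \<Sum>k<n. noise (\<iota> j) \<omega> * noise (\<iota> k) \<omega>)" for \<omega>
    by (simp add: power2_eq_square sum_product)
  show "integrable M (\<lambda>\<omega>. (\<Sum>k<n. noise (\<iota> k) \<omega>)\<^sup>2)"
    unfolding sq by (simp add: noise_prod_integrable)
  have "expectation (\<lambda>\<omega>. (\<Sum>k<n. noise (\<iota> k) \<omega>)\<^sup>2) = (\<Sum>j<n. \<Sum>k<n. if j = k then 1 else 0)"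
    unfolding sq using assms by (simp add: noise_prod_integrable expectation_noise_prod inj_eq)
  then show "expectation (\<lambda>\<omega>. (\<Sum>k<n. noise (\<iota> k) \<omega>)\<^sup>2) = real n" by simp
qed


section \<open>Second moments\<close>

definition "drift1 k x = v1 ((real k + 1/2) * dt) (snd x)"
definition "drift2 k x = v2 ((real k + 1/2) * dt) (fst (drift_map v1 v2 dt k x))"

lemma drift_map_eq: "drift_map v1 v2 dt k x = (fst x + dt * drift1 k x, snd x + dt * drift2 k x)"
  by (simp add: drift_map_def Let_def drift1_def drift2_def)

lemma fst_X: "fst (X n \<omega>) = fst X0 + dt * (\<Sum>k<n. drift1 k (X k \<omega>)) + s * (\<Sum>k<n. noise (Inl k) \<omega>)"
  by (induction n) (auto simp: X_Suc drift_map_eq algebra_simps X_def[of 0])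

lemma snd_X: "snd (X n \<omega>) = snd X0 + dt * (\<Sum>k<n. drift2 k (X k \<omega>)) + s * (\<Sum>k<n. noise (Inr k) \<omega>)"
  by (induction n) (auto simp: X_Suc drift_map_eq algebra_simps X_def[of 0])

lemma drift1_measurable[measurable]: "drift1 k \<in> borel_measurable (borel \<Otimes>\<^sub>M borel)"
  unfolding drift1_def by measurable

lemma drift2_measurable[measurable]: "drift2 k \<in> borel_measurable (borel \<Otimes>\<^sub>M borel)"
  unfolding drift2_def by measurable

lemma abs_drift_le: "\<bar>drift1 k x\<bar> \<le> B" "\<bar>drift2 k x\<bar> \<le> B"
  unfolding drift1_def drift2_def by (rule v1_bound v2_bound)+

lemma periodic2_drift: "periodic2 (drift1 k)" "periodic2 (drift2 k)"
  unfolding periodic2_def drift1_def drift2_def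
  by (simp_all add: drift_map_periodic v1_periodic v2_periodic)

lemma torus_mean_drift: "torus_mean (drift1 k) = 0" "torus_mean (drift2 k) = 0"
proof -
  let ?t = "(real k + 1/2) * dt"
  show "torus_mean (drift1 k) = 0"
    unfolding torus_mean_def drift1_def by (simp add: v1_mean)
  have "torus_mean (drift2 k) = (\<integral>a. (\<integral>b. v2 ?t (a + v1 ?t b * dt) \<partial>unif) \<partial>unif)"
    unfolding torus_mean_def drift2_def drift_map_def by (simp add: Let_def)
  also have "\<dots> = (\<integral>b. (\<integral>a. v2 ?t (a + v1 ?t b * dt) \<partial>unif) \<partial>unif)"
    by (rule integral_prob_swap[OF prob_space_unif prob_space_unif, where C=B]) (measurable, simp add: v2_bound)
  also have "\<dots> = (\<integral>b. (\<integral>a. v2 ?t a \<partial>unif) \<partial>unif)"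
    by (rule Bochner_Integration.integral_cong[OF refl], rule integral_unif_periodic_translate[where C=B])
       (auto simp: v2_bound v2_periodic)
  finally show "torus_mean (drift2 k) = 0" by (simp add: v2_mean)
qed

lemma integrable_drift_sum_products:
  fixes G :: "nat \<Rightarrow> real \<times> real \<Rightarrow> real"
  assumes [measurable]: "\<And>k. G k \<in> borel_measurable (borel \<Otimes>\<^sub>M borel)"
    and bound: "\<And>k x. \<bar>G k x\<bar> \<le> C"
  shows "integrable M (\<lambda>\<omega>. G j (X j \<omega>) * G k (X k \<omega>))"
proof (rule integrable_const_bound[where B="C * C"])
  have "C \<ge> 0" using bound[of 0 0] by linarith
  then show "AE \<omega> in M. norm (G j (X j \<omega>) * G k (X k \<omega>)) \<le> C * C"
    by (intro AE_I2) (simp add: abs_mult mult_mono[OF bound bound])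
qed measurable

lemma drift_cross_term_le:
  fixes G :: "nat \<Rightarrow> real \<times> real \<Rightarrow> real"
  assumes G_meas[measurable]: "\<And>k. G k \<in> borel_measurable (borel \<Otimes>\<^sub>M borel)"
    and bound: "\<And>k x. \<bar>G k x\<bar> \<le> C" and per: "\<And>k. periodic2 (G k)" and mean: "\<And>k. torus_mean (G k) = 0"
  shows "expectation (\<lambda>\<omega>. (\<Sum>j<n. G j (X j \<omega>)) * G n (X n \<omega>)) \<le> C\<^sup>2 / (1 - rho)"
proof -
  have "expectation (\<lambda>\<omega>. (\<Sum>j<n. G j (X j \<omega>)) * G n (X n \<omega>))
      = (\<Sum>j<n. expectation (\<lambda>\<omega>. G j (X j \<omega>) * G n (X n \<omega>)))"
    unfolding sum_distrib_right
    by (rule Bochner_Integration.integral_sum, rule integrable_drift_sum_products[where G=G, OF G_meas bound])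
  also have "\<dots> \<le> (\<Sum>j<n. C * C * rho ^ (n - j))"
  proof (rule sum_mono)
    fix j assume "j \<in> {..<n}"
    then have "j + (n - j) = n" by simp
    then show "expectation (\<lambda>\<omega>. G j (X j \<omega>) * G n (X n \<omega>)) \<le> C * C * rho ^ (n - j)"
      using correlation_decay[where \<Phi>="G j" and g="G n" and j=j and d="n - j", OF G_meas bound G_meas bound per mean]
      by simp
  qed
  also have "\<dots> = C\<^sup>2 * (\<Sum>j<n. rho ^ (n - j))"
    by (simp add: sum_distrib_left power2_eq_square)
  also have "\<dots> \<le> C\<^sup>2 * (1 / (1 - rho))"
    by (intro mult_left_mono sum_power_diff_le rho_bounds) simp
  finally show ?thesis by simp
qed

lemma drift_sum_second_moment:
  fixes G :: "nat \<Rightarrow> real \<times> real \<Rightarrow> real"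
  assumes G_meas[measurable]: "\<And>k. G k \<in> borel_measurable (borel \<Otimes>\<^sub>M borel)"
    and bound: "\<And>k x. \<bar>G k x\<bar> \<le> C" and per: "\<And>k. periodic2 (G k)" and mean: "\<And>k. torus_mean (G k) = 0"
  shows "integrable M (\<lambda>\<omega>. (\<Sum>k<n. G k (X k \<omega>))\<^sup>2)"
    and "expectation (\<lambda>\<omega>. (\<Sum>k<n. G k (X k \<omega>))\<^sup>2) \<le> real n * (C\<^sup>2 + 2 * C\<^sup>2 / (1 - rho))"
proof -
  have sq: "(\<Sum>k<n. G k (X k \<omega>))\<^sup>2 = (\<Sum>j<n. \<Sum>k<n. G j (X j \<omega>) * G k (X k \<omega>))" for n \<omega>
    by (simp add: power2_eq_square sum_product)
  have int_sq: "integrable M (\<lambda>\<omega>. (\<Sum>k<n. G k (X k \<omega>))\<^sup>2)" for n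
    unfolding sq by (intro Bochner_Integration.integrable_sum integrable_drift_sum_products[where G=G, OF G_meas bound])
  then show "integrable M (\<lambda>\<omega>. (\<Sum>k<n. G k (X k \<omega>))\<^sup>2)" .
  have "C \<ge> 0" using bound[of 0 0] by linarith
  then have G_sq: "\<bar>G k x * G k x\<bar> \<le> C\<^sup>2" for k x
    using mult_mono[OF bound[of k x] bound[of k x]] by (simp add: abs_mult power2_eq_square)
  show "expectation (\<lambda>\<omega>. (\<Sum>k<n. G k (X k \<omega>))\<^sup>2) \<le> real n * (C\<^sup>2 + 2 * C\<^sup>2 / (1 - rho))"
  proof (induction n)
    case (Suc n)
    define D where "D = (\<lambda>\<omega>. \<Sum>k<n. G k (X k \<omega>))"
    define g where "g = (\<lambda>\<omega>. G n (X n \<omega>))"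
    have expand: "(\<Sum>k<Suc n. G k (X k \<omega>))\<^sup>2 = (D \<omega>)\<^sup>2 + 2 * (D \<omega> * g \<omega>) + g \<omega> * g \<omega>" for \<omega>
      by (simp add: D_def g_def power2_eq_square algebra_simps)
    have int_Dg: "integrable M (\<lambda>\<omega>. D \<omega> * g \<omega>)"
      unfolding D_def g_def sum_distrib_right
      by (intro Bochner_Integration.integrable_sum integrable_drift_sum_products[where G=G, OF G_meas bound])
    have int_g2: "integrable M (\<lambda>\<omega>. g \<omega> * g \<omega>)"
      unfolding g_def by (rule integrable_drift_sum_products[where G=G, OF G_meas bound])
    have "\<bar>expectation (\<lambda>\<omega>. g \<omega> * g \<omega>)\<bar> \<le> C\<^sup>2"
      unfolding g_def by (rule abs_integral_le_bound[OF prob_space_axioms]) (measurable, rule G_sq)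
    then have g2: "expectation (\<lambda>\<omega>. g \<omega> * g \<omega>) \<le> C\<^sup>2" by simp
    have "expectation (\<lambda>\<omega>. (\<Sum>k<Suc n. G k (X k \<omega>))\<^sup>2)
        = expectation (\<lambda>\<omega>. (D \<omega>)\<^sup>2) + 2 * expectation (\<lambda>\<omega>. D \<omega> * g \<omega>) + expectation (\<lambda>\<omega>. g \<omega> * g \<omega>)"
      unfolding expand using int_sq int_Dg int_g2 by (simp add: D_def)
    also have "\<dots> \<le> real n * (C\<^sup>2 + 2 * C\<^sup>2 / (1 - rho)) + 2 * (C\<^sup>2 / (1 - rho)) + C\<^sup>2"
      using Suc.IH drift_cross_term_le[where G=G and n=n, OF G_meas bound per mean] g2
      unfolding D_def g_def by linarith
    also have "\<dots> = real (Suc n) * (C\<^sup>2 + 2 * C\<^sup>2 / (1 - rho))"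
      by (simp add: algebra_simps add_divide_distrib)
    finally show ?case .
  qed simp
qed


lemma coordinate_second_moment:
  fixes G :: "nat \<Rightarrow> real \<times> real \<Rightarrow> real" and \<iota> :: "nat \<Rightarrow> nat + nat"
  assumes G_meas[measurable]: "\<And>k. G k \<in> borel_measurable (borel \<Otimes>\<^sub>M borel)"
    and bound: "\<And>k x. \<bar>G k x\<bar> \<le> B" and per: "\<And>k. periodic2 (G k)" and mean: "\<And>k. torus_mean (G k) = 0"
    and "inj \<iota>"
  shows "integrable M (\<lambda>\<omega>. (c + dt * (\<Sum>k<n. G k (X k \<omega>)) + s * (\<Sum>k<n. noise (\<iota> k) \<omega>))\<^sup>2)"
    and "expectation (\<lambda>\<omega>. (c + dt * (\<Sum>k<n. G k (X k \<omega>)) + s * (\<Sum>k<n. noise (\<iota> k) \<omega>))\<^sup>2)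
      \<le> 3 * (c\<^sup>2 + real n * (dt\<^sup>2 * (B\<^sup>2 + 2 * B\<^sup>2 / (1 - rho)) + s\<^sup>2))"
proof -
  note drift = drift_sum_second_moment[where G=G and n=n, OF G_meas bound per mean]
  note noise = noise_sum_second_moment[OF \<open>inj \<iota>\<close>, of n]
  note affine = second_moment_affine_le[OF _ _ drift(1) noise(1), of c dt s]
  show "integrable M (\<lambda>\<omega>. (c + dt * (\<Sum>k<n. G k (X k \<omega>)) + s * (\<Sum>k<n. noise (\<iota> k) \<omega>))\<^sup>2)"
    by (rule affine(1)) measurable
  have "expectation (\<lambda>\<omega>. (c + dt * (\<Sum>k<n. G k (X k \<omega>)) + s * (\<Sum>k<n. noise (\<iota> k) \<omega>))\<^sup>2)
      \<le> 3 * (c\<^sup>2 + dt\<^sup>2 * expectation (\<lambda>\<omega>. (\<Sum>k<n. G k (X k \<omega>))\<^sup>2) + s\<^sup>2 * real n)"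
    unfolding noise(2)[symmetric] by (rule affine(2)) measurable
  also have "\<dots> \<le> 3 * (c\<^sup>2 + dt\<^sup>2 * (real n * (B\<^sup>2 + 2 * B\<^sup>2 / (1 - rho))) + s\<^sup>2 * real n)"
    using drift(2) by (intro mult_left_mono add_mono) auto
  finally show "expectation (\<lambda>\<omega>. (c + dt * (\<Sum>k<n. G k (X k \<omega>)) + s * (\<Sum>k<n. noise (\<iota> k) \<omega>))\<^sup>2)
      \<le> 3 * (c\<^sup>2 + real n * (dt\<^sup>2 * (B\<^sup>2 + 2 * B\<^sup>2 / (1 - rho)) + s\<^sup>2))"
    by (simp add: algebra_simps)
qed

lemma X_second_moment:
  defines "K \<equiv> 6 * (dt\<^sup>2 * (B\<^sup>2 + 2 * B\<^sup>2 / (1 - rho)) + s\<^sup>2)"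
  shows "integrable M (\<lambda>\<omega>. (norm (X n \<omega>))\<^sup>2)"
    and "expectation (\<lambda>\<omega>. (norm (X n \<omega>))\<^sup>2) \<le> 3 * (norm X0)\<^sup>2 + real n * K"
proof -
  have norm_X: "(norm (X n \<omega>))\<^sup>2 = (fst (X n \<omega>))\<^sup>2 + (snd (X n \<omega>))\<^sup>2" for \<omega>
    by (cases "X n \<omega>") (simp add: norm_Pair)
  have norm_X0: "(norm X0)\<^sup>2 = (fst X0)\<^sup>2 + (snd X0)\<^sup>2"
    by (cases X0) (simp add: norm_Pair)
  have "inj (Inl :: nat \<Rightarrow> nat + nat)" "inj (Inr :: nat \<Rightarrow> nat + nat)" by (auto simp: inj_def)
  note fst_bound = coordinate_second_moment[where G=drift1 and c="fst X0" and n=n, OF drift1_measurable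
      abs_drift_le(1) periodic2_drift(1) torus_mean_drift(1) \<open>inj Inl\<close>, folded fst_X]
  note snd_bound = coordinate_second_moment[where G=drift2 and c="snd X0" and n=n, OF drift2_measurable
      abs_drift_le(2) periodic2_drift(2) torus_mean_drift(2) \<open>inj Inr\<close>, folded snd_X]
  show "integrable M (\<lambda>\<omega>. (norm (X n \<omega>))\<^sup>2)"
    unfolding norm_X using fst_bound(1) snd_bound(1) by simp
  have "expectation (\<lambda>\<omega>. (norm (X n \<omega>))\<^sup>2)
      = expectation (\<lambda>\<omega>. (fst (X n \<omega>))\<^sup>2) + expectation (\<lambda>\<omega>. (snd (X n \<omega>))\<^sup>2)"
    unfolding norm_X using fst_bound(1) snd_bound(1) by simp
  also have "\<dots> \<le> 3 * (norm X0)\<^sup>2 + real n * K"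
    using add_mono[OF fst_bound(2) snd_bound(2)] norm_X0 unfolding K_def by (simp add: algebra_simps)
  finally show "expectation (\<lambda>\<omega>. (norm (X n \<omega>))\<^sup>2) \<le> 3 * (norm X0)\<^sup>2 + real n * K" .
qed

theorem X_second_moment_linear:
  "(\<forall>n. integrable M (\<lambda>\<omega>. (norm (X n \<omega>))\<^sup>2))
    \<and> bdd_above ((\<lambda>n. expectation (\<lambda>\<omega>. (norm (X n \<omega>))\<^sup>2) / real n) ` {1..})"
proof (intro conjI allI X_second_moment(1) bdd_aboveI2)
  fix n :: nat assume "n \<in> {1..}"
  then have n: "real n \<ge> 1" by simp
  define K where "K = 6 * (dt\<^sup>2 * (B\<^sup>2 + 2 * B\<^sup>2 / (1 - rho)) + s\<^sup>2)"
  have "expectation (\<lambda>\<omega>. (norm (X n \<omega>))\<^sup>2) \<le> real n * (3 * (norm X0)\<^sup>2) + real n * K"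
    using X_second_moment(2)[of n] mult_right_mono[OF n, of "3 * (norm X0)\<^sup>2"] unfolding K_def by simp
  then show "expectation (\<lambda>\<omega>. (norm (X n \<omega>))\<^sup>2) / real n \<le> 3 * (norm X0)\<^sup>2 + K"
    using n by (simp add: divide_le_eq algebra_simps)
qed

end

section \<open>Velocity fields of a periodic Hamiltonian\<close>

lemma deriv_periodic:
  fixes f :: "real \<Rightarrow> real"
  assumes "\<And>x. f (x + 1) = f x"
  shows "deriv f (x + 1) = deriv f x"
proof -
  have "(f has_real_derivative D) (at (x + 1)) \<longleftrightarrow> (f has_real_derivative D) (at x)" for D
    using DERIV_shift[of f D x 1] by (simp add: assms)
  then show ?thesis by (simp add: deriv_def)
qed

lemma smooth2_deriv_continuous:
  assumes "smooth2 H"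
  shows "continuous_on UNIV (\<lambda>p. deriv (H (fst p)) (snd p))"
proof -
  obtain D :: "nat \<Rightarrow> nat \<Rightarrow> real \<Rightarrow> real \<Rightarrow> real" where
    D0: "D 0 0 = H" and cont: "\<And>i j. continuous_on UNIV (\<lambda>p. D i j (fst p) (snd p))"
    and dx: "\<And>i j t x. ((\<lambda>y. D i j t y) has_real_derivative D i (Suc j) t x) (at x)"
    using assms unfolding smooth2_def by blast
  have "deriv (H t) x = D 0 1 t x" for t x
    using DERIV_imp_deriv[OF dx[of 0 0 t x]] by (simp add: D0)
  then show ?thesis using cont[of 0 1] by simp
qed

lemma continuous_on_slice:
  assumes "continuous_on UNIV (\<lambda>p. E (fst p) (snd p))"
  shows "continuous_on UNIV (E t)"
  using continuous_on_compose[OF continuous_on_Pair[OF continuous_on_const continuous_on_id, of UNIV t]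
      continuous_on_subset[OF assms]]
  by (simp add: comp_def)

lemma continuous_periodic2_bounded:
  fixes E :: "real \<Rightarrow> real \<Rightarrow> real"
  assumes cont: "continuous_on UNIV (\<lambda>p. E (fst p) (snd p))"
    and per_t: "\<And>t x. E (t + 1) x = E t x" and per_x: "\<And>t x. E t (x + 1) = E t x"
  obtains B where "\<And>t x. \<bar>E t x\<bar> \<le> B"
proof -
  let ?K = "{0..1::real} \<times> {0..1::real}"
  have "compact ((\<lambda>p. E (fst p) (snd p)) ` ?K)"
    by (intro compact_continuous_image continuous_on_subset[OF cont] compact_Times compact_Icc) simp
  then have "bounded ((\<lambda>p. E (fst p) (snd p)) ` ?K)" by (rule compact_imp_bounded)
  then obtain B where B: "\<forall>y \<in> (\<lambda>p. E (fst p) (snd p)) ` ?K. norm y \<le> B"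
    unfolding bounded_iff by blast
  have "\<bar>E t x\<bar> \<le> B" for t x
  proof -
    let ?t = "t - of_int \<lfloor>t\<rfloor>" and ?x = "x - of_int \<lfloor>x\<rfloor>"
    have "E t x = E ?t ?x"
      using periodic_add_of_int[of "\<lambda>t. E t x", OF per_t, of ?t "\<lfloor>t\<rfloor>"]
        periodic_add_of_int[of "E ?t", OF per_x, of ?x "\<lfloor>x\<rfloor>"] by simp
    moreover have "(?t, ?x) \<in> ?K"
      by (auto simp: frac_lt_1[unfolded frac_def] less_imp_le)
    ultimately show ?thesis using bspec[OF B imageI[of "(?t, ?x)"]] by simp
  qed
  then show ?thesis by (rule that)
qed

lemma smooth_periodic_deriv:
  assumes "smooth2 H" and per_t: "\<And>t x. H (t + 1) x = H t x" and per_x: "\<And>t x. H t (x + 1) = H t x"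
  obtains B where "\<And>t x. \<bar>deriv (H t) x\<bar> \<le> B" and "\<And>t. continuous_on UNIV (deriv (H t))"
    and "\<And>t x. deriv (H t) (x + 1) = deriv (H t) x"
proof -
  note cont = smooth2_deriv_continuous[OF assms(1)]
  have "H (t + 1) = H t" for t using per_t by auto
  then have deriv_per_t: "deriv (H (t + 1)) x = deriv (H t) x" for t x by simp
  have deriv_per_x: "deriv (H t) (x + 1) = deriv (H t) x" for t x
    by (rule deriv_periodic) (rule per_x)
  obtain B where "\<And>t x. \<bar>deriv (H t) x\<bar> \<le> B"
    using continuous_periodic2_bounded[where E="\<lambda>t x. deriv (H t) x", OF cont deriv_per_t deriv_per_x] by blast
  then show ?thesis using that continuous_on_slice[OF cont] deriv_per_x by auto
qed

lemma integral_unif_eq_integral: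
  fixes f :: "real \<Rightarrow> real"
  assumes cont: "continuous_on UNIV f"
  shows "(\<integral>x. f x \<partial>unif) = integral {0..1} f"
proof -
  have [measurable]: "f \<in> borel_measurable borel" using cont by (rule borel_measurable_continuous_onI)
  have "(\<integral>x. f x \<partial>unif) = (\<integral>x. indicator {0..1} x *\<^sub>R f x \<partial>lborel)"
    unfolding integral_unif[OF \<open>f \<in> borel_measurable borel\<close>]
    using AE_lborel_singleton[of 1] by (intro integral_cong_AE) (auto simp: indicator_def)
  also have "\<dots> = integral {0..1} f"
    using set_borel_integral_eq_integral(2)[OF borel_integrable_atLeastAtMost'[OF continuous_on_subset[OF cont]]]
    by (simp add: set_lebesgue_integral_def)
  finally show ?thesis .
qed

lemma hamiltonian_velocity:
  assumes "smooth2 H" "\<And>t x. H (t + 1) x = H t x" "\<And>t x. H t (x + 1) = H t x"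
    and v: "\<And>t x. v t x = c * deriv (H t) x" and mean: "\<And>t. integral {0..1} (v t) = 0"
  obtains B where "\<And>t. v t \<in> borel_measurable borel" and "\<And>t x. \<bar>v t x\<bar> \<le> B"
    and "\<And>t x. v t (x + 1) = v t x" and "\<And>t. (\<integral>x. v t x \<partial>unif) = 0"
proof -
  obtain B where bound: "\<And>t x. \<bar>deriv (H t) x\<bar> \<le> B" and cont: "\<And>t. continuous_on UNIV (deriv (H t))"
    and per: "\<And>t x. deriv (H t) (x + 1) = deriv (H t) x"
    by (rule smooth_periodic_deriv[OF assms(1-3)]) (rule that)
  have v_eq: "v t = (\<lambda>x. c * deriv (H t) x)" for t using v by auto
  have cont_v: "continuous_on UNIV (v t)" for t
    unfolding v_eq by (intro continuous_on_mult continuous_on_const cont)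
  have meas: "v t \<in> borel_measurable borel" for t
    by (rule borel_measurable_continuous_onI[OF cont_v])
  have abs_le: "\<bar>v t x\<bar> \<le> \<bar>c\<bar> * B" for t x
    unfolding v abs_mult by (intro mult_left_mono bound) simp
  have periodic: "v t (x + 1) = v t x" for t x
    by (simp add: v per)
  have mean_zero: "(\<integral>x. v t x \<partial>unif) = 0" for t
    using integral_unif_eq_integral[OF cont_v] mean by simp
  show ?thesis by (rule that[OF meas abs_le periodic mean_zero])
qed

theorem theorem4p5:
  fixes M :: "'a measure"
    and H1 H2 :: "real \<Rightarrow> real \<Rightarrow> real"
    and v1 v2 :: "real \<Rightarrow> real \<Rightarrow> real"
    and \<sigma> :: real and N :: nat and X0 :: "real \<times> real"
    and \<xi>1 \<xi>2 :: "nat \<Rightarrow> 'a \<Rightarrow> real"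
  assumes "prob_space M"
    and "\<sigma> > 0" and "N \<ge> 1"
    and "smooth2 H1" and "smooth2 H2"
    and "\<And>t x. H1 (t + 1) x = H1 t x" and "\<And>t x. H1 t (x + 1) = H1 t x"
    and "\<And>t x. H2 (t + 1) x = H2 t x" and "\<And>t x. H2 t (x + 1) = H2 t x"
    and "\<And>t x2. v1 t x2 = - deriv (H2 t) x2"
    and "\<And>t x1. v2 t x1 = deriv (H1 t) x1"
    and "\<And>t. integral {0..1} (v1 t) = 0"
    and "\<And>t. integral {0..1} (v2 t) = 0"
    and "prob_space.indep_vars M (\<lambda>_. borel) (\<lambda>k. case k of Inl n \<Rightarrow> \<xi>1 n | Inr n \<Rightarrow> \<xi>2 n) UNIV"
    and "\<And>n. distributed M lborel (\<xi>1 n) std_normal_density"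
    and "\<And>n. distributed M lborel (\<xi>2 n) std_normal_density"
  shows "(\<forall>n. integrable M (\<lambda>\<omega>. (norm (scheme v1 v2 \<sigma> N X0 (\<lambda>k. \<xi>1 k \<omega>) (\<lambda>k. \<xi>2 k \<omega>) n))\<^sup>2))
    \<and> bdd_above ((\<lambda>n. prob_space.expectation M
          (\<lambda>\<omega>. (norm (scheme v1 v2 \<sigma> N X0 (\<lambda>k. \<xi>1 k \<omega>) (\<lambda>k. \<xi>2 k \<omega>) n))\<^sup>2) / real n) ` {1..})"
proof -
  have v1: "v1 t x = -1 * deriv (H2 t) x" and v2: "v2 t x = 1 * deriv (H1 t) x" for t x
    using assms(10,11) by simp_all
  obtain B1 where V1: "\<And>t. v1 t \<in> borel_measurable borel" "\<And>t x. \<bar>v1 t x\<bar> \<le> B1"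
    "\<And>t x. v1 t (x + 1) = v1 t x" "\<And>t. (\<integral>x. v1 t x \<partial>unif) = 0"
    by (rule hamiltonian_velocity[OF assms(5,8,9) v1 assms(12)]) (rule that)
  obtain B2 where V2: "\<And>t. v2 t \<in> borel_measurable borel" "\<And>t x. \<bar>v2 t x\<bar> \<le> B2"
    "\<And>t x. v2 t (x + 1) = v2 t x" "\<And>t. (\<integral>x. v2 t x \<partial>unif) = 0"
    by (rule hamiltonian_velocity[OF assms(4,6,7) v2 assms(13)]) (rule that)
  interpret scheme_setting M v1 v2 \<sigma> N X0 \<xi>1 \<xi>2 "max B1 B2"
    by (intro scheme_setting.intro[OF assms(1)] scheme_setting_axioms.intro)
       (use assms(3) in \<open>simp_all add: V1 V2 assms(2,14-16) le_max_iff_disj\<close>)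
  show ?thesis using X_second_moment_linear unfolding X_def .
qed

end
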